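(* Let $(\mathcal C,\otimes,I)$ be a monoidal category and let $G$ be a strong endofunctor on $\mathcal C$ (with strength $\tau^G$) such that the algebraically free monad $G^*$ exists and is strongly generated; regard $G^*$ as a strong monad with strength $\widetilde\tau$. Let $\langle A,\ g: GA\to A,\ m: A\otimes A\to A,\ u: I\to A\rangle$ be a $G$-monoid. Then $\langle A,\ \llbracket g\rrbracket : G^*A\to A,\ m,\ u\rangle$ is an Eilenberg--Moore $G^*$-monoid.
   Context: Structural isomorphisms of the monoidal category are written $\cong$. A monoid is $\langle A, m: A\otimes A\to A, u: I\to A\rangle$ satisfying the usual unit and associativity laws. A strength for an endofunctor $G$ is a natural transformation $\tau^G_{A,B}: GA\otimes B\to G(A\otimes B)$ compatible with the unitor and associator; a strong monad $M$ is a monad with a strength $\tau$ additionally satisfying $\tau\circ(\eta\otimes \mathrm{id})=\eta$ and $\tau\circ(\mu\otimes\mathrm{id})=\mu\circ M\tau\circ\tau$. A $G$-algebra is a pair $\langle C, c: GC\to C\rangle$; morphisms $h$ satisfy $d\circ Gh = h\circ c$. The algebraically free monad $G^*$ exists if the forgetful functor from $G$-algebras to $\mathcal C$ has a left adjoint; the free algebra on $X$ is $\langle G^*X, \mathsf{cons}_X: GG^*X\to G^*X\rangle$ with unit $\eta^{\mathcal F}_X: X\to G^*X$. For a $G$-algebra $g: GA\to A$, $\llbracket g\rrbracket: G^*A\to A$ denotes the unique $G$-algebra morphism $\langle G^*A,\mathsf{cons}\rangle\to\langle A,g\rangle$ with $\llbracket g\rrbracket\circ\eta^{\mathcal F}_A=\mathrm{id}_A$.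 $G^*$ is strongly generated if for every morphism $f: A\otimes B\to C$ and every $G$-algebra $\langle C,c\rangle$ there is a unique $\widehat f: G^*A\otimes B\to C$ with $\widehat f\circ(\eta^{\mathcal F}\otimes\mathrm{id})=f$ and $\widehat f\circ(\mathsf{cons}\otimes \mathrm{id}) = c\circ G\widehat f\circ\tau^G$. In that case $G^*$ is a strong monad with strength $\widetilde\tau_{A,B}=\widehat{f}$ for $f=\eta^{\mathcal F}_{A\otimes B}$ and the algebra $\langle G^*(A\otimes B),\mathsf{cons}\rangle$. A $G$-monoid is a tuple $\langle A, g: GA\to A, m, u\rangle$ where $\langle A,m,u\rangle$ is a monoid and $m\circ(g\otimes\mathrm{id}_A) = g\circ Gm\circ\tau^G_{A,A}$. For a strong monad $M$ with strength $\tau$, an Eilenberg--Moore $M$-monoid is a tuple $\langle A, a: MA\to A, m, u\rangle$ such that $\langle A,a\rangle$ is an Eilenberg--Moore algebra ($a\circ Ma=a\circ\mu_A$, $a\circ\eta_A=\mathrm{id}$), $\langle A,m,u\rangle$ is a monoid, and $m\circ(a\otimes \mathrm{id}_A) = a\circ Mm\circ \tau_{A,A}$. *)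

theory Defs
  imports Main
begin

text \<open>A monoidal category. Objects are the elements of type 'o, arrows are the elements
  of type 'a. mc_comp C g f is the composite g after f (meaningful when mc_cod f = mc_dom g).\<close>

record ('o, 'a) moncat =
  mc_dom :: "'a \<Rightarrow> 'o"
  mc_cod :: "'a \<Rightarrow> 'o"
  mc_comp :: "'a \<Rightarrow> 'a \<Rightarrow> 'a"
  mc_id :: "'o \<Rightarrow> 'a"
  mc_ten :: "'o \<Rightarrow> 'o \<Rightarrow> 'o"
  mc_tenm :: "'a \<Rightarrow> 'a \<Rightarrow> 'a"
  mc_unit :: "'o"
  mc_assoc :: "'o \<Rightarrow> 'o \<Rightarrow> 'o \<Rightarrow> 'a"
  mc_lunit :: "'o \<Rightarrow> 'a"
  mc_runit :: "'o \<Rightarrow> 'a"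

definition hom :: "('o, 'a) moncat \<Rightarrow> 'a \<Rightarrow> 'o \<Rightarrow> 'o \<Rightarrow> bool" where
  "hom C f X Y \<longleftrightarrow> mc_dom C f = X \<and> mc_cod C f = Y"

definition category :: "('o, 'a) moncat \<Rightarrow> bool" where
  "category C \<longleftrightarrow>
    (\<forall>X. hom C (mc_id C X) X X) \<and>
    (\<forall>f g. mc_cod C f = mc_dom C g \<longrightarrow> hom C (mc_comp C g f) (mc_dom C f) (mc_cod C g)) \<and>
    (\<forall>f. mc_comp C f (mc_id C (mc_dom C f)) = f \<and> mc_comp C (mc_id C (mc_cod C f)) f = f) \<and>
    (\<forall>f g h. mc_cod C f = mc_dom C g \<and> mc_cod C g = mc_dom C h \<longrightarrow>
        mc_comp C h (mc_comp C g f) = mc_comp C (mc_comp C h g) f)"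

definition iso :: "('o, 'a) moncat \<Rightarrow> 'a \<Rightarrow> bool" where
  "iso C f \<longleftrightarrow> (\<exists>g. hom C g (mc_cod C f) (mc_dom C f) \<and>
      mc_comp C g f = mc_id C (mc_dom C f) \<and> mc_comp C f g = mc_id C (mc_cod C f))"

definition monoidal_category :: "('o, 'a) moncat \<Rightarrow> bool" where
  "monoidal_category C \<longleftrightarrow> category C \<and>
    \<comment> \<open>tensor is a bifunctor\<close>
    (\<forall>f g. hom C (mc_tenm C f g) (mc_ten C (mc_dom C f) (mc_dom C g)) (mc_ten C (mc_cod C f) (mc_cod C g))) \<and>
    (\<forall>X Y. mc_tenm C (mc_id C X) (mc_id C Y) = mc_id C (mc_ten C X Y)) \<and>
    (\<forall>f f' g g'. mc_cod C f = mc_dom C f' \<and> mc_cod C g = mc_dom C g' \<longrightarrow>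
        mc_tenm C (mc_comp C f' f) (mc_comp C g' g) = mc_comp C (mc_tenm C f' g') (mc_tenm C f g)) \<and>
    \<comment> \<open>associator: natural isomorphism (X\<otimes>Y)\<otimes>Z \<rightarrow> X\<otimes>(Y\<otimes>Z)\<close>
    (\<forall>X Y Z. hom C (mc_assoc C X Y Z) (mc_ten C (mc_ten C X Y) Z) (mc_ten C X (mc_ten C Y Z))
              \<and> iso C (mc_assoc C X Y Z)) \<and>
    (\<forall>f g h. mc_comp C (mc_assoc C (mc_cod C f) (mc_cod C g) (mc_cod C h)) (mc_tenm C (mc_tenm C f g) h)
             = mc_comp C (mc_tenm C f (mc_tenm C g h)) (mc_assoc C (mc_dom C f) (mc_dom C g) (mc_dom C h))) \<and>
    \<comment> \<open>left unitor I\<otimes>X \<rightarrow> X\<close>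
    (\<forall>X. hom C (mc_lunit C X) (mc_ten C (mc_unit C) X) X \<and> iso C (mc_lunit C X)) \<and>
    (\<forall>f. mc_comp C (mc_lunit C (mc_cod C f)) (mc_tenm C (mc_id C (mc_unit C)) f)
          = mc_comp C f (mc_lunit C (mc_dom C f))) \<and>
    \<comment> \<open>right unitor X\<otimes>I \<rightarrow> X\<close>
    (\<forall>X. hom C (mc_runit C X) (mc_ten C X (mc_unit C)) X \<and> iso C (mc_runit C X)) \<and>
    (\<forall>f. mc_comp C (mc_runit C (mc_cod C f)) (mc_tenm C f (mc_id C (mc_unit C)))
          = mc_comp C f (mc_runit C (mc_dom C f))) \<and>
    \<comment> \<open>pentagon\<close>
    (\<forall>W X Y Z. mc_comp C (mc_assoc C W X (mc_ten C Y Z)) (mc_assoc C (mc_ten C W X) Y Z)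
        = mc_comp C (mc_tenm C (mc_id C W) (mc_assoc C X Y Z))
            (mc_comp C (mc_assoc C W (mc_ten C X Y) Z) (mc_tenm C (mc_assoc C W X Y) (mc_id C Z)))) \<and>
    \<comment> \<open>triangle\<close>
    (\<forall>X Y. mc_comp C (mc_tenm C (mc_id C X) (mc_lunit C Y)) (mc_assoc C X (mc_unit C) Y)
        = mc_tenm C (mc_runit C X) (mc_id C Y))"

definition endofunctor :: "('o, 'a) moncat \<Rightarrow> ('o \<Rightarrow> 'o) \<Rightarrow> ('a \<Rightarrow> 'a) \<Rightarrow> bool" where
  "endofunctor C Go Gm \<longleftrightarrow>
    (\<forall>f. hom C (Gm f) (Go (mc_dom C f)) (Go (mc_cod C f))) \<and>
    (\<forall>X. Gm (mc_id C X) = mc_id C (Go X)) \<and>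
    (\<forall>f g. mc_cod C f = mc_dom C g \<longrightarrow> Gm (mc_comp C g f) = mc_comp C (Gm g) (Gm f))"

definition strength :: "('o, 'a) moncat \<Rightarrow> ('o \<Rightarrow> 'o) \<Rightarrow> ('a \<Rightarrow> 'a) \<Rightarrow> ('o \<Rightarrow> 'o \<Rightarrow> 'a) \<Rightarrow> bool" where
  "strength C Go Gm t \<longleftrightarrow>
    (\<forall>A B. hom C (t A B) (mc_ten C (Go A) B) (Go (mc_ten C A B))) \<and>
    (\<forall>f g. mc_comp C (t (mc_cod C f) (mc_cod C g)) (mc_tenm C (Gm f) g)
           = mc_comp C (Gm (mc_tenm C f g)) (t (mc_dom C f) (mc_dom C g))) \<and>
    (\<forall>A. mc_comp C (Gm (mc_runit C A)) (t A (mc_unit C)) = mc_runit C (Go A)) \<and>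
    (\<forall>A B D. mc_comp C (t A (mc_ten C B D)) (mc_assoc C (Go A) B D)
        = mc_comp C (Gm (mc_assoc C A B D))
            (mc_comp C (t (mc_ten C A B) D) (mc_tenm C (t A B) (mc_id C D))))"

text \<open>G^* (on objects Fo) is the algebraically free monad: each \<langle>Fo X, cons X\<rangle> is the free
  G-algebra on X with unit etaF X.\<close>
definition algebraically_free ::
  "('o, 'a) moncat \<Rightarrow> ('o \<Rightarrow> 'o) \<Rightarrow> ('a \<Rightarrow> 'a) \<Rightarrow> ('o \<Rightarrow> 'o) \<Rightarrow> ('o \<Rightarrow> 'a) \<Rightarrow> ('o \<Rightarrow> 'a) \<Rightarrow> bool" where
  "algebraically_free C Go Gm Fo cons etaF \<longleftrightarrow>
    (\<forall>X. hom C (cons X) (Go (Fo X)) (Fo X) \<and> hom C (etaF X) X (Fo X)) \<and>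
    (\<forall>X Y c f. hom C c (Go Y) Y \<and> hom C f X Y \<longrightarrow>
       (\<exists>!h. hom C h (Fo X) Y \<and> mc_comp C h (cons X) = mc_comp C c (Gm h)
             \<and> mc_comp C h (etaF X) = f))"

definition strongly_generated ::
  "('o, 'a) moncat \<Rightarrow> ('o \<Rightarrow> 'o) \<Rightarrow> ('a \<Rightarrow> 'a) \<Rightarrow> ('o \<Rightarrow> 'o \<Rightarrow> 'a) \<Rightarrow>
   ('o \<Rightarrow> 'o) \<Rightarrow> ('o \<Rightarrow> 'a) \<Rightarrow> ('o \<Rightarrow> 'a) \<Rightarrow> bool" where
  "strongly_generated C Go Gm tG Fo cons etaF \<longleftrightarrow>
    (\<forall>A B Y c f. hom C c (Go Y) Y \<and> hom C f (mc_ten C A B) Y \<longrightarrow>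
       (\<exists>!h. hom C h (mc_ten C (Fo A) B) Y
             \<and> mc_comp C h (mc_tenm C (etaF A) (mc_id C B)) = f
             \<and> mc_comp C h (mc_tenm C (cons A) (mc_id C B))
                 = mc_comp C c (mc_comp C (Gm h) (tG (Fo A) B))))"

definition free_ext ::
  "('o, 'a) moncat \<Rightarrow> ('o \<Rightarrow> 'o) \<Rightarrow> ('a \<Rightarrow> 'a) \<Rightarrow> ('o \<Rightarrow> 'o) \<Rightarrow> ('o \<Rightarrow> 'a) \<Rightarrow> ('o \<Rightarrow> 'a) \<Rightarrow>
   'o \<Rightarrow> 'o \<Rightarrow> 'a \<Rightarrow> 'a \<Rightarrow> 'a" where
  "free_ext C Go Gm Fo cons etaF X Y c f =
    (THE h. hom C h (Fo X) Y \<and> mc_comp C h (cons X) = mc_comp C c (Gm h)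
            \<and> mc_comp C h (etaF X) = f)"

definition sem ::
  "('o, 'a) moncat \<Rightarrow> ('o \<Rightarrow> 'o) \<Rightarrow> ('a \<Rightarrow> 'a) \<Rightarrow> ('o \<Rightarrow> 'o) \<Rightarrow> ('o \<Rightarrow> 'a) \<Rightarrow> ('o \<Rightarrow> 'a) \<Rightarrow>
   'o \<Rightarrow> 'a \<Rightarrow> 'a" where
  "sem C Go Gm Fo cons etaF A g = free_ext C Go Gm Fo cons etaF A A g (mc_id C A)"

definition free_map ::
  "('o, 'a) moncat \<Rightarrow> ('o \<Rightarrow> 'o) \<Rightarrow> ('a \<Rightarrow> 'a) \<Rightarrow> ('o \<Rightarrow> 'o) \<Rightarrow> ('o \<Rightarrow> 'a) \<Rightarrow> ('o \<Rightarrow> 'a) \<Rightarrow>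
   'a \<Rightarrow> 'a" where
  "free_map C Go Gm Fo cons etaF f =
    free_ext C Go Gm Fo cons etaF (mc_dom C f) (Fo (mc_cod C f)) (cons (mc_cod C f))
      (mc_comp C (etaF (mc_cod C f)) f)"

definition free_mult ::
  "('o, 'a) moncat \<Rightarrow> ('o \<Rightarrow> 'o) \<Rightarrow> ('a \<Rightarrow> 'a) \<Rightarrow> ('o \<Rightarrow> 'o) \<Rightarrow> ('o \<Rightarrow> 'a) \<Rightarrow> ('o \<Rightarrow> 'a) \<Rightarrow>
   'o \<Rightarrow> 'a" where
  "free_mult C Go Gm Fo cons etaF X = sem C Go Gm Fo cons etaF (Fo X) (cons X)"

definition hat ::
  "('o, 'a) moncat \<Rightarrow> ('o \<Rightarrow> 'o) \<Rightarrow> ('a \<Rightarrow> 'a) \<Rightarrow> ('o \<Rightarrow> 'o \<Rightarrow> 'a) \<Rightarrow>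
   ('o \<Rightarrow> 'o) \<Rightarrow> ('o \<Rightarrow> 'a) \<Rightarrow> ('o \<Rightarrow> 'a) \<Rightarrow> 'o \<Rightarrow> 'o \<Rightarrow> 'o \<Rightarrow> 'a \<Rightarrow> 'a \<Rightarrow> 'a" where
  "hat C Go Gm tG Fo cons etaF A B Y c f =
    (THE h. hom C h (mc_ten C (Fo A) B) Y
            \<and> mc_comp C h (mc_tenm C (etaF A) (mc_id C B)) = f
            \<and> mc_comp C h (mc_tenm C (cons A) (mc_id C B))
                = mc_comp C c (mc_comp C (Gm h) (tG (Fo A) B)))"

definition free_strength ::
  "('o, 'a) moncat \<Rightarrow> ('o \<Rightarrow> 'o) \<Rightarrow> ('a \<Rightarrow> 'a) \<Rightarrow> ('o \<Rightarrow> 'o \<Rightarrow> 'a) \<Rightarrow>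
   ('o \<Rightarrow> 'o) \<Rightarrow> ('o \<Rightarrow> 'a) \<Rightarrow> ('o \<Rightarrow> 'a) \<Rightarrow> 'o \<Rightarrow> 'o \<Rightarrow> 'a" where
  "free_strength C Go Gm tG Fo cons etaF A B =
    hat C Go Gm tG Fo cons etaF A B (Fo (mc_ten C A B)) (cons (mc_ten C A B)) (etaF (mc_ten C A B))"

definition is_monoid :: "('o, 'a) moncat \<Rightarrow> 'o \<Rightarrow> 'a \<Rightarrow> 'a \<Rightarrow> bool" where
  "is_monoid C A m u \<longleftrightarrow>
    hom C m (mc_ten C A A) A \<and> hom C u (mc_unit C) A \<and>
    mc_comp C m (mc_tenm C u (mc_id C A)) = mc_lunit C A \<and>
    mc_comp C m (mc_tenm C (mc_id C A) u) = mc_runit C A \<and>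
    mc_comp C m (mc_tenm C m (mc_id C A))
      = mc_comp C m (mc_comp C (mc_tenm C (mc_id C A) m) (mc_assoc C A A A))"

definition G_monoid ::
  "('o, 'a) moncat \<Rightarrow> ('o \<Rightarrow> 'o) \<Rightarrow> ('a \<Rightarrow> 'a) \<Rightarrow> ('o \<Rightarrow> 'o \<Rightarrow> 'a) \<Rightarrow> 'o \<Rightarrow> 'a \<Rightarrow> 'a \<Rightarrow> 'a \<Rightarrow> bool" where
  "G_monoid C Go Gm tG A g m u \<longleftrightarrow>
    hom C g (Go A) A \<and> is_monoid C A m u \<and>
    mc_comp C m (mc_tenm C g (mc_id C A)) = mc_comp C g (mc_comp C (Gm m) (tG A A))"

definition EM_monoid ::
  "('o, 'a) moncat \<Rightarrow> ('o \<Rightarrow> 'o) \<Rightarrow> ('a \<Rightarrow> 'a) \<Rightarrow> ('o \<Rightarrow> 'a) \<Rightarrow> ('o \<Rightarrow> 'a) \<Rightarrow> ('o \<Rightarrow> 'o \<Rightarrow> 'a) \<Rightarrow>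
   'o \<Rightarrow> 'a \<Rightarrow> 'a \<Rightarrow> 'a \<Rightarrow> bool" where
  "EM_monoid C Mo Mm eta mu tau A a m u \<longleftrightarrow>
    hom C a (Mo A) A \<and>
    mc_comp C a (Mm a) = mc_comp C a (mu A) \<and>
    mc_comp C a (eta A) = mc_id C A \<and>
    is_monoid C A m u \<and>
    mc_comp C m (mc_tenm C a (mc_id C A)) = mc_comp C a (mc_comp C (Mm m) (tau A A))"

end

theory Submission
  imports Defs
begin

text \<open>Every law to be checked is an equation between arrows out of a free algebra
  \<open>G\<^sup>*X\<close>, or out of \<open>G\<^sup>*X \<otimes> B\<close>. By the universal property of the free algebra,
  respectively by strong generation, such arrows are determined by their restriction along
  the unit \<open>\<eta>\<close> as soon as they are (strong) algebra morphisms. So it suffices to see that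
  both sides are morphisms of this kind, which follows from the \<open>G\<close>-monoid axiom and the
  naturality of \<open>\<tau>\<^sup>G\<close>, and then to compare them on generators, where both reduce to
  the identity, respectively to \<open>m\<close>.\<close>

locale monoidal =
  fixes C :: "('o, 'a) moncat"
  assumes monoidal: "monoidal_category C"
begin

abbreviation arr_comp (infixr "\<cdot>" 55) where "g \<cdot> f \<equiv> mc_comp C g f"
abbreviation "dm \<equiv> mc_dom C"
abbreviation "cd \<equiv> mc_cod C"
abbreviation "ident \<equiv> mc_id C"
abbreviation "ten \<equiv> mc_ten C"
abbreviation "tenm \<equiv> mc_tenm C"

lemma category: "category C"
  using monoidal by (simp add: monoidal_category_def)

lemma dom_id [simp]: "dm (ident X) = X"
  and cod_id [simp]: "cd (ident X) = X"
  using category by (auto simp: category_def hom_def)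

lemma dom_comp [simp]: "cd f = dm g \<Longrightarrow> dm (g \<cdot> f) = dm f"
  and cod_comp [simp]: "cd f = dm g \<Longrightarrow> cd (g \<cdot> f) = cd g"
  using category by (auto simp: category_def hom_def)

lemma comp_id_right [simp]: "dm f = X \<Longrightarrow> f \<cdot> ident X = f"
  and comp_id_left [simp]: "cd f = Y \<Longrightarrow> ident Y \<cdot> f = f"
  using category by (auto simp: category_def)

lemma comp_assoc: "cd f = dm g \<Longrightarrow> cd g = dm h \<Longrightarrow> (h \<cdot> g) \<cdot> f = h \<cdot> (g \<cdot> f)"
  using category by (auto simp: category_def)

lemma dom_tenm [simp]: "dm (tenm f g) = ten (dm f) (dm g)"
  and cod_tenm [simp]: "cd (tenm f g) = ten (cd f) (cd g)"
  using monoidal by (auto simp: monoidal_category_def hom_def)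

lemma tenm_id [simp]: "tenm (ident X) (ident Y) = ident (ten X Y)"
  using monoidal by (simp add: monoidal_category_def)

lemma tenm_comp:
  "cd f = dm f' \<Longrightarrow> cd g = dm g' \<Longrightarrow> tenm (f' \<cdot> f) (g' \<cdot> g) = tenm f' g' \<cdot> tenm f g"
  using monoidal by (auto simp: monoidal_category_def)

lemma tenm_comp_id:
  "cd f = dm f' \<Longrightarrow> tenm (f' \<cdot> f) (ident B) = tenm f' (ident B) \<cdot> tenm f (ident B)"
  using tenm_comp[of f f' "ident B" "ident B"] by simp

end

locale free_strong_setting = monoidal C for C :: "('o, 'a) moncat" +
  fixes Go :: "'o \<Rightarrow> 'o" and Gm :: "'a \<Rightarrow> 'a" and tG :: "'o \<Rightarrow> 'o \<Rightarrow> 'a"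
    and Fo :: "'o \<Rightarrow> 'o" and cons :: "'o \<Rightarrow> 'a" and etaF :: "'o \<Rightarrow> 'a"
  assumes endofunctor: "endofunctor C Go Gm"
    and strength: "strength C Go Gm tG"
    and algebraically_free: "algebraically_free C Go Gm Fo cons etaF"
    and strongly_generated: "strongly_generated C Go Gm tG Fo cons etaF"
begin

abbreviation "ext \<equiv> free_ext C Go Gm Fo cons etaF"
abbreviation "interp \<equiv> sem C Go Gm Fo cons etaF"
abbreviation "fmap \<equiv> free_map C Go Gm Fo cons etaF"
abbreviation "fmult \<equiv> free_mult C Go Gm Fo cons etaF"
abbreviation "hat_ext \<equiv> hat C Go Gm tG Fo cons etaF"
abbreviation "ftau \<equiv> free_strength C Go Gm tG Fo cons etaF"

lemma dom_Gm [simp]: "dm (Gm f) = Go (dm f)"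
  and cod_Gm [simp]: "cd (Gm f) = Go (cd f)"
  using endofunctor by (auto simp: endofunctor_def hom_def)

lemma Gm_comp: "cd f = dm g \<Longrightarrow> Gm (g \<cdot> f) = Gm g \<cdot> Gm f"
  using endofunctor by (auto simp: endofunctor_def)

lemma dom_tG [simp]: "dm (tG X Y) = ten (Go X) Y"
  and cod_tG [simp]: "cd (tG X Y) = Go (ten X Y)"
  using strength by (auto simp: strength_def hom_def)

lemma tG_natural: "tG (cd f) (cd g) \<cdot> tenm (Gm f) g = Gm (tenm f g) \<cdot> tG (dm f) (dm g)"
  using strength by (auto simp: strength_def)

lemma dom_cons [simp]: "dm (cons X) = Go (Fo X)"
  and cod_cons [simp]: "cd (cons X) = Fo X"
  and dom_etaF [simp]: "dm (etaF X) = X"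
  and cod_etaF [simp]: "cd (etaF X) = Fo X"
  using algebraically_free by (auto simp: algebraically_free_def hom_def)

definition alg_hom :: "'a \<Rightarrow> 'a \<Rightarrow> 'a \<Rightarrow> bool" where
  "alg_hom c d h \<longleftrightarrow> dm c = Go (cd c) \<and> dm d = Go (cd d) \<and>
     dm h = cd c \<and> cd h = cd d \<and> h \<cdot> c = d \<cdot> Gm h"

text \<open>The equation characterising \<open>\<widehat>f\<close> in the definition of strong generation, for an
  arbitrary source algebra \<open>c\<close> in place of \<open>cons\<close>; a \<open>G\<close>-monoid multiplication is such a
  morphism from \<open>g\<close> to \<open>g\<close>.\<close>
definition strong_alg_hom :: "'o \<Rightarrow> 'a \<Rightarrow> 'a \<Rightarrow> 'a \<Rightarrow> bool" where
  "strong_alg_hom B c d h \<longleftrightarrow> dm c = Go (cd c) \<and> dm d = Go (cd d) \<and>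
     dm h = ten (cd c) B \<and> cd h = cd d \<and>
     h \<cdot> tenm c (ident B) = d \<cdot> Gm h \<cdot> tG (cd c) B"

lemma alg_hom_dom: "alg_hom c d h \<Longrightarrow> dm h = cd c"
  and alg_hom_cod: "alg_hom c d h \<Longrightarrow> cd h = cd d"
  by (simp_all add: alg_hom_def)

lemma strong_alg_hom_dom: "strong_alg_hom B c d h \<Longrightarrow> dm h = ten (cd c) B"
  and strong_alg_hom_cod: "strong_alg_hom B c d h \<Longrightarrow> cd h = cd d"
  by (simp_all add: strong_alg_hom_def)

lemma alg_hom_comp:
  assumes "alg_hom c d h" and "alg_hom d e k"
  shows "alg_hom c e (k \<cdot> h)"
proof -
  have "(k \<cdot> h) \<cdot> c = k \<cdot> d \<cdot> Gm h"
    using assms by (simp add: alg_hom_def comp_assoc)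
  also have "\<dots> = e \<cdot> Gm (k \<cdot> h)"
    using assms by (simp add: alg_hom_def Gm_comp flip: comp_assoc)
  finally show ?thesis
    using assms by (simp add: alg_hom_def)
qed

lemma alg_hom_comp_strong_alg_hom:
  assumes h: "strong_alg_hom B c d h" and k: "alg_hom d e k"
  shows "strong_alg_hom B c e (k \<cdot> h)"
proof -
  have "(k \<cdot> h) \<cdot> tenm c (ident B) = k \<cdot> d \<cdot> Gm h \<cdot> tG (cd c) B"
    using h k by (simp add: alg_hom_def strong_alg_hom_def comp_assoc)
  also have "\<dots> = (k \<cdot> d) \<cdot> Gm h \<cdot> tG (cd c) B"
    using h k by (intro comp_assoc[symmetric]) (simp_all add: alg_hom_def strong_alg_hom_def)
  also have "\<dots> = e \<cdot> Gm (k \<cdot> h) \<cdot> tG (cd c) B"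
    using h k by (simp add: alg_hom_def strong_alg_hom_def Gm_comp comp_assoc)
  finally show ?thesis
    using h k by (simp add: alg_hom_def strong_alg_hom_def)
qed

lemma strong_alg_hom_comp_tenm:
  assumes h: "alg_hom c d h" and k: "strong_alg_hom B d e k"
  shows "strong_alg_hom B c e (k \<cdot> tenm h (ident B))"
proof -
  have h_typed: "dm h = cd c" "cd h = cd d" and h_eq: "h \<cdot> c = d \<cdot> Gm h"
    and algebras: "dm c = Go (cd c)" "dm d = Go (cd d)" "dm e = Go (cd e)"
    using h k by (simp_all add: alg_hom_def strong_alg_hom_def)
  have k_typed: "dm k = ten (cd d) B" "cd k = cd e"
    and k_eq: "k \<cdot> tenm d (ident B) = e \<cdot> Gm k \<cdot> tG (cd d) B"
    using k by (simp_all add: strong_alg_hom_def)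
  have tG_h: "tG (cd d) B \<cdot> tenm (Gm h) (ident B) = Gm (tenm h (ident B)) \<cdot> tG (cd c) B"
    using tG_natural[of h "ident B"] h_typed by simp
  have "(k \<cdot> tenm h (ident B)) \<cdot> tenm c (ident B) = k \<cdot> tenm (h \<cdot> c) (ident B)"
    using h_typed k_typed algebras by (simp add: comp_assoc tenm_comp_id)
  also have "\<dots> = (k \<cdot> tenm d (ident B)) \<cdot> tenm (Gm h) (ident B)"
    unfolding h_eq using h_typed k_typed algebras by (simp add: comp_assoc tenm_comp_id)
  also have "\<dots> = e \<cdot> Gm k \<cdot> tG (cd d) B \<cdot> tenm (Gm h) (ident B)"
    unfolding k_eq using h_typed k_typed algebras by (simp add: comp_assoc)
  also have "\<dots> = e \<cdot> Gm (k \<cdot> tenm h (ident B)) \<cdot> tG (cd c) B"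
    unfolding tG_h using h_typed k_typed algebras by (simp add: Gm_comp comp_assoc)
  finally show ?thesis
    using h_typed k_typed algebras by (simp add: strong_alg_hom_def)
qed

lemma free_ext_alg_hom:
  assumes "dm d = Go Y" "cd d = Y" "dm f = X" "cd f = Y"
  shows "alg_hom (cons X) d (ext X Y d f)" and "ext X Y d f \<cdot> etaF X = f"
proof -
  have "\<exists>!h. hom C h (Fo X) Y \<and> h \<cdot> cons X = d \<cdot> Gm h \<and> h \<cdot> etaF X = f"
    using algebraically_free assms unfolding algebraically_free_def hom_def by blast
  from theI'[OF this] show "alg_hom (cons X) d (ext X Y d f)" "ext X Y d f \<cdot> etaF X = f"
    using assms unfolding free_ext_def alg_hom_def hom_def by auto
qed

lemma alg_hom_from_free_unique:
  assumes h: "alg_hom (cons X) d h" and h': "alg_hom (cons X) d h'"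
    and on_generators: "h \<cdot> etaF X = h' \<cdot> etaF X"
  shows "h = h'"
proof -
  have "hom C d (Go (cd d)) (cd d)" "hom C (h \<cdot> etaF X) X (cd d)"
    using h by (simp_all add: alg_hom_def hom_def)
  then have "\<exists>!k. hom C k (Fo X) (cd d) \<and> k \<cdot> cons X = d \<cdot> Gm k \<and> k \<cdot> etaF X = h \<cdot> etaF X"
    using algebraically_free unfolding algebraically_free_def by blast
  then show ?thesis
    using h h' on_generators unfolding hom_def alg_hom_def by auto
qed

lemma hat_ext_strong_alg_hom:
  assumes "dm d = Go Y" "cd d = Y" "dm f = ten X B" "cd f = Y"
  shows "strong_alg_hom B (cons X) d (hat_ext X B Y d f)"
    and "hat_ext X B Y d f \<cdot> tenm (etaF X) (ident B) = f"
proof -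
  have "\<exists>!h. hom C h (ten (Fo X) B) Y \<and> h \<cdot> tenm (etaF X) (ident B) = f
      \<and> h \<cdot> tenm (cons X) (ident B) = d \<cdot> Gm h \<cdot> tG (Fo X) B"
    using strongly_generated assms unfolding strongly_generated_def hom_def by blast
  from theI'[OF this] show "strong_alg_hom B (cons X) d (hat_ext X B Y d f)"
      "hat_ext X B Y d f \<cdot> tenm (etaF X) (ident B) = f"
    using assms unfolding hat_def strong_alg_hom_def hom_def by auto
qed

lemma strong_alg_hom_from_free_unique:
  assumes h: "strong_alg_hom B (cons X) d h" and h': "strong_alg_hom B (cons X) d h'"
    and on_generators: "h \<cdot> tenm (etaF X) (ident B) = h' \<cdot> tenm (etaF X) (ident B)"
  shows "h = h'"
proof -
  have "hom C d (Go (cd d)) (cd d)" "hom C (h \<cdot> tenm (etaF X) (ident B)) (ten X B) (cd d)"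
    using h by (simp_all add: strong_alg_hom_def hom_def)
  then have "\<exists>!k. hom C k (ten (Fo X) B) (cd d)
      \<and> k \<cdot> tenm (etaF X) (ident B) = h \<cdot> tenm (etaF X) (ident B)
      \<and> k \<cdot> tenm (cons X) (ident B) = d \<cdot> Gm k \<cdot> tG (Fo X) B"
    using strongly_generated unfolding strongly_generated_def by blast
  then show ?thesis
    using h h' on_generators unfolding hom_def strong_alg_hom_def by auto
qed

lemma interp_alg_hom:
  assumes "dm g = Go A" "cd g = A"
  shows "alg_hom (cons A) g (interp A g)" and "interp A g \<cdot> etaF A = ident A"
  using free_ext_alg_hom[of g A "ident A" A] assms unfolding sem_def by auto

lemma fmap_alg_hom:
  assumes "dm f = X" "cd f = Y"
  shows "alg_hom (cons X) (cons Y) (fmap f)" and "fmap f \<cdot> etaF X = etaF Y \<cdot> f"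
  using free_ext_alg_hom[of "cons Y" "Fo Y" "etaF Y \<cdot> f" X] assms unfolding free_map_def by auto

lemma fmult_alg_hom:
  shows "alg_hom (cons (Fo X)) (cons X) (fmult X)" and "fmult X \<cdot> etaF (Fo X) = ident (Fo X)"
  using interp_alg_hom[of "cons X" "Fo X"] unfolding free_mult_def by auto

lemma ftau_strong_alg_hom:
  shows "strong_alg_hom B (cons X) (cons (ten X B)) (ftau X B)"
    and "ftau X B \<cdot> tenm (etaF X) (ident B) = etaF (ten X B)"
  using hat_ext_strong_alg_hom[of "cons (ten X B)" "Fo (ten X B)" "etaF (ten X B)" X B]
  unfolding free_strength_def by auto

lemma interp_mult:
  assumes "dm g = Go A" "cd g = A"
  shows "interp A g \<cdot> fmap (interp A g) = interp A g \<cdot> fmult A"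
proof (rule alg_hom_from_free_unique)
  note s = interp_alg_hom[OF assms] and mu = fmult_alg_hom[of A]
  have s_typed: "dm (interp A g) = Fo A" "cd (interp A g) = A"
    using s assms by (simp_all add: alg_hom_def)
  note Fs = fmap_alg_hom[OF s_typed]
  show "alg_hom (cons (Fo A)) g (interp A g \<cdot> fmap (interp A g))"
    using alg_hom_comp[OF Fs(1) s(1)] .
  show "alg_hom (cons (Fo A)) g (interp A g \<cdot> fmult A)"
    using alg_hom_comp[OF mu(1) s(1)] .
  have "(interp A g \<cdot> fmap (interp A g)) \<cdot> etaF (Fo A) = (interp A g \<cdot> etaF A) \<cdot> interp A g"
    using Fs(2) alg_hom_dom[OF Fs(1)] alg_hom_cod[OF Fs(1)] s_typed by (simp add: comp_assoc)
  also have "\<dots> = (interp A g \<cdot> fmult A) \<cdot> etaF (Fo A)"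
    using s(2) mu(2) alg_hom_dom[OF mu(1)] alg_hom_cod[OF mu(1)] s_typed
    by (simp add: comp_assoc)
  finally show "(interp A g \<cdot> fmap (interp A g)) \<cdot> etaF (Fo A)
      = (interp A g \<cdot> fmult A) \<cdot> etaF (Fo A)" .
qed

lemma interp_free_strength:
  assumes g: "dm g = Go X" "cd g = X" and k: "dm k = Go Y" "cd k = Y"
    and m: "strong_alg_hom B g k m"
  shows "m \<cdot> tenm (interp X g) (ident B) = interp Y k \<cdot> fmap m \<cdot> ftau X B"
proof (rule strong_alg_hom_from_free_unique)
  note s = interp_alg_hom[OF g] and s' = interp_alg_hom[OF k]
    and t = ftau_strong_alg_hom[where X = X and B = B]
  have m_typed: "dm m = ten X B" "cd m = Y"
    using m g k by (simp_all add: strong_alg_hom_def)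
  note Fm = fmap_alg_hom[OF m_typed]
  have typed: "dm (interp X g) = Fo X" "cd (interp X g) = X" "dm (interp Y k) = Fo Y"
    "dm (fmap m) = Fo (ten X B)" "cd (fmap m) = Fo Y"
    "dm (ftau X B) = ten (Fo X) B" "cd (ftau X B) = Fo (ten X B)"
    using s s' Fm(1) t(1) g by (simp_all add: alg_hom_def strong_alg_hom_def)
  show "strong_alg_hom B (cons X) k (m \<cdot> tenm (interp X g) (ident B))"
    using strong_alg_hom_comp_tenm[OF s(1) m] .
  show "strong_alg_hom B (cons X) k (interp Y k \<cdot> fmap m \<cdot> ftau X B)"
    using alg_hom_comp_strong_alg_hom[OF t(1) alg_hom_comp[OF Fm(1) s'(1)]] typed
    by (simp add: comp_assoc)
  have "(m \<cdot> tenm (interp X g) (ident B)) \<cdot> tenm (etaF X) (ident B)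
      = m \<cdot> tenm (interp X g \<cdot> etaF X) (ident B)"
    using m_typed typed by (simp add: comp_assoc tenm_comp_id)
  also have "\<dots> = (interp Y k \<cdot> etaF Y) \<cdot> m"
    using s(2) s'(2) m_typed by simp
  also have "\<dots> = (interp Y k \<cdot> fmap m \<cdot> ftau X B) \<cdot> tenm (etaF X) (ident B)"
    using t(2) Fm(2) m_typed typed by (simp add: comp_assoc)
  finally show "(m \<cdot> tenm (interp X g) (ident B)) \<cdot> tenm (etaF X) (ident B)
      = (interp Y k \<cdot> fmap m \<cdot> ftau X B) \<cdot> tenm (etaF X) (ident B)" .
qed

end

theorem lemma9:
  fixes C :: "('o, 'a) moncat"
    and Go :: "'o \<Rightarrow> 'o" and Gm :: "'a \<Rightarrow> 'a" and tG :: "'o \<Rightarrow> 'o \<Rightarrow> 'a"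
    and Fo :: "'o \<Rightarrow> 'o" and cons :: "'o \<Rightarrow> 'a" and etaF :: "'o \<Rightarrow> 'a"
    and A :: 'o and g m u :: 'a
  assumes "monoidal_category C"
    and "endofunctor C Go Gm"
    and "strength C Go Gm tG"
    and "algebraically_free C Go Gm Fo cons etaF"
    and "strongly_generated C Go Gm tG Fo cons etaF"
    and "G_monoid C Go Gm tG A g m u"
  shows "EM_monoid C Fo (free_map C Go Gm Fo cons etaF) etaF (free_mult C Go Gm Fo cons etaF)
           (free_strength C Go Gm tG Fo cons etaF) A (sem C Go Gm Fo cons etaF A g) m u"
proof -
  interpret free_strong_setting C Go Gm tG Fo cons etaF
    using assms(1-5) by (simp add: free_strong_setting_def free_strong_setting_axioms_def monoidal_def)
  have g: "dm g = Go A" "cd g = A" and monoid: "is_monoid C A m u"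
    using assms(6) by (simp_all add: G_monoid_def hom_def)
  have "strong_alg_hom A g g m"
    using assms(6) g by (simp add: G_monoid_def strong_alg_hom_def is_monoid_def hom_def)
  then have "m \<cdot> tenm (interp A g) (ident A) = interp A g \<cdot> fmap m \<cdot> ftau A A"
    using interp_free_strength[OF g g] by blast
  then show ?thesis
    using interp_alg_hom[OF g] interp_mult[OF g] monoid g
    by (simp add: EM_monoid_def alg_hom_def hom_def)
qed

end
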